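(* Let $m\ge1$, $q=2^m$, let $n$ be odd, and let $L(x)=ax^{2^k}+bx^{2^l}$ with $a,b\in\mathbb F_{q^n}$ and integers $0\le k,l<mn$, such that $L$ is nonzero as a map on $\mathbb F_{q^n}$. Let $d=\gcd(l-k,mn)$ and $s=\gcd(k-1,m)$. (1) If $k\equiv l\pmod m$, then $\mathrm{Tr}(x^{q+1})+L(x)$ is a permutation polynomial of $\mathbb F_{q^n}$ if and only if either (a) $a+b\in\mathbb F_q^*$, $(a+b)^{\frac{q-1}{2^s-1}}\ne1$ and $a^{\frac{q^n-1}{2^d-1}}\ne b^{\frac{q^n-1}{2^d-1}}$; or (b) $a+b=0$, $d=m$ and $\mathrm{Tr}(a^{-1})\ne0$. (2) If $k\not\equiv l\pmod m$ and $l\equiv1\pmod m$, then $\mathrm{Tr}(x^{q+1})+L(x)$ is a permutation polynomial of $\mathbb F_{q^n}$ if and only if $a,b\in\mathbb F_q$, $a^{\frac{q-1}{2^s-1}}\ne(b+1)^{\frac{q-1}{2^s-1}}$, and either $a^{\frac{q^n-1}{2^d-1}}\ne b^{\frac{q^n-1}{2^d-1}}$, or $d$ divides $m$ and $a^{\frac{q-1}{2^d-1}}=b^{\frac{q-1}{2^d-1}}$. (3) In particular, if $b=0$, then $\mathrm{Tr}(x^{q+1})+ax^{2^k}$ is a permutation polynomial of $\mathbb F_{q^n}$ if and only if $a\in\mathbb F_q^*$ and $a^{\frac{q-1}{2^s-1}}\ne1$.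
   Context: $\mathrm{Tr}$ denotes the trace map of $\mathbb F_{q^n}$ over $\mathbb F_q$. Polynomials are regarded as maps on $\mathbb F_{q^n}$; a permutation polynomial of a field is one inducing a bijection of that field. *)

theory Defs
  imports Main
begin

definition Tr :: "nat \<Rightarrow> nat \<Rightarrow> 'a::field \<Rightarrow> 'a" where
  "Tr q n y = (\<Sum>i<n. y ^ (q ^ i))"

definition subF :: "nat \<Rightarrow> 'a::field set" where
  "subF q = {x. x ^ q = x}"

definition perm_poly :: "('a \<Rightarrow> 'a) \<Rightarrow> bool" where
  "perm_poly f \<longleftrightarrow> bij f"

end

theory Submission
  imports Defs "HOL-Algebra.Algebraic_Closure_Type"
begin

text \<open>
  Put \<open>Q x = Tr (x^(q+1))\<close> and \<open>f = Q + L\<close> with \<open>L\<close> additive. Then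
  \<open>f (x + u) - f x = Q u + L u + Tr (x * (u^q + u^(q^(n-1))))\<close>; for odd \<open>n\<close> the factor
  \<open>u^q + u^(q^(n-1))\<close> vanishes exactly on \<open>F_q\<close>, and \<open>x \<mapsto> Tr (x * w)\<close> maps onto \<open>F_q\<close> when
  \<open>w \<noteq> 0\<close>. Hence \<open>f\<close> is a permutation iff \<open>L\<close> maps no element outside \<open>F_q\<close> into \<open>F_q\<close> and
  \<open>L u \<noteq> u\<^sup>2\<close> for all nonzero \<open>u \<in> F_q\<close>.

  For \<open>L x = a x^(2^k) + b x^(2^l)\<close> both conditions come down to two facts about a field of
  order \<open>2^M\<close>: \<open>x^(2^k) = x^(2^l)\<close> holds exactly on its subfield of order \<open>2^d\<close>,
  \<open>d = gcd (l - k) M\<close>; and, the multiplicative group being cyclic, \<open>a u^(2^k) = b u^(2^l)\<close> has a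
  solution \<open>u \<noteq> 0\<close> iff \<open>a^E = b^E\<close> with \<open>E = (2^M - 1) / (2^d - 1)\<close>. When \<open>a = b\<close>, the first
  condition is decided by the image of \<open>v \<mapsto> v + v^(q^t)\<close>, which is the kernel of the trace.
\<close>

section \<open>Numbers of the form \<open>2^a - 1\<close>\<close>

lemma two_power_minus_one_pos: "M > 0 \<Longrightarrow> (2::nat) ^ M - 1 > 0"
  using one_less_power[of "2::nat" M] by simp

lemma two_power_minus_one_dvd: "(2::int) ^ a - 1 dvd 2 ^ (a * c) - 1"
  using power_diff_1_eq[of "(2::int) ^ a" c] by (simp add: power_mult)

lemma two_power_minus_one_dvd_nat:
  assumes "e dvd M"
  shows "(2::nat) ^ e - 1 dvd 2 ^ M - 1"
proof -
  obtain c where "M = e * c"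
    using assms ..
  then show ?thesis
    using two_power_minus_one_dvd[of e c] by (simp flip: int_dvd_int_iff)
qed

lemma two_power_minus_one_div_pos:
  assumes "e dvd M" and "M > 0"
  shows "((2::nat) ^ M - 1) div (2 ^ e - 1) > 0"
  using two_power_minus_one_dvd_nat[OF assms(1)] two_power_minus_one_pos[OF assms(2)]
  by (metis dvd_div_eq_0_iff neq0_conv)

lemma gcd_two_power_minus_one: "gcd ((2::int) ^ a - 1) (2 ^ b - 1) = 2 ^ gcd a b - 1"
proof (induction a b rule: gcd_nat_induct)
  case (step a b)
  obtain t where t: "(2::int) ^ (b * (a div b)) - 1 = (2 ^ b - 1) * t"
    using two_power_minus_one_dvd[of b "a div b"] by auto
  have "(2::int) ^ a - 1 = (2 ^ (a mod b) - 1) + 2 ^ (a mod b) * (2 ^ (b * (a div b)) - 1)"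
    by (simp add: algebra_simps flip: power_add)
  also have "\<dots> = (2 ^ (a mod b) * t) * (2 ^ b - 1) + (2 ^ (a mod b) - 1)"
    unfolding t by (simp add: ac_simps)
  finally have "gcd ((2::int) ^ a - 1) (2 ^ b - 1) = gcd (2 ^ b - 1) (2 ^ (a mod b) - 1)"
    by (metis gcd.commute gcd_add_mult)
  also have "\<dots> = 2 ^ gcd a b - 1"
    using step.IH by (simp add: gcd_red_nat[of a b])
  finally show ?case .
qed simp

lemma two_power_minus_one_dvd_iff: "(2::int) ^ a - 1 dvd 2 ^ b - 1 \<longleftrightarrow> a dvd b"
proof
  assume "(2::int) ^ a - 1 dvd 2 ^ b - 1"
  then have "(2::int) ^ gcd a b - 1 = 2 ^ a - 1"
    by (simp flip: gcd_two_power_minus_one add: gcd_proj1_iff)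
  then show "a dvd b"
    by simp (metis gcd_dvd2)
qed (auto intro: two_power_minus_one_dvd)

lemma gcd_diff_commute_int: "gcd (a - b) c = gcd (b - a) (c::int)"
  by (metis gcd_neg1_int minus_diff_eq)

lemma gcd_two_power_diff:
  assumes "M > 0"
  shows "gcd ((2::int) ^ l - 2 ^ k) (2 ^ M - 1) = 2 ^ nat (gcd (int l - int k) (int M)) - 1"
proof -
  have *: "gcd ((2::int) ^ l - 2 ^ k) (2 ^ M - 1) = 2 ^ nat (gcd (int l - int k) (int M)) - 1"
    if "k \<le> l" for k l
  proof -
    have "(2::int) ^ l - 2 ^ k = 2 ^ k * (2 ^ (l - k) - 1)"
      using that by (simp add: algebra_simps flip: power_add)
    moreover have "coprime ((2::int) ^ k) (2 ^ M - 1)"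
      using assms by (simp add: coprime_commute)
    ultimately have "gcd ((2::int) ^ l - 2 ^ k) (2 ^ M - 1) = 2 ^ gcd (l - k) M - 1"
      by (simp add: gcd_mult_left_left_cancel gcd_two_power_minus_one)
    also have "gcd (l - k) M = nat (gcd (int l - int k) (int M))"
      using that by (metis gcd_int_int_eq nat_int of_nat_diff)
    finally show ?thesis .
  qed
  show ?thesis
  proof (cases "k \<le> l")
    case False
    then show ?thesis
      using *[of l k] by (simp add: gcd_diff_commute_int[of "2 ^ k"] gcd_diff_commute_int[of "int k"])
  qed (rule *)
qed

lemma gcd_eq_gcd_of_dvd:
  fixes x M M' :: int
  assumes "gcd x M dvd M'" and "M' dvd M"
  shows "gcd x M' = gcd x M"
  using assms by (meson dvd_trans gcd_dvd1 gcd_dvd2 gcd_greatest gcd_ge_0_int zdvd_antisym_nonneg)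

lemma exists_nat_linear_congruence_iff:
  fixes c A :: int
  assumes "D > 0"
  shows "(\<exists>x::nat. int D dvd c + int x * A) \<longleftrightarrow> gcd A (int D) dvd c"
proof
  assume "\<exists>x::nat. int D dvd c + int x * A"
  then obtain x :: nat where "int D dvd c + int x * A" ..
  then have "gcd A (int D) dvd c + int x * A"
    by (meson dvd_trans gcd_dvd2)
  then show "gcd A (int D) dvd c"
    by (simp add: dvd_add_left_iff)
next
  assume "gcd A (int D) dvd c"
  then obtain t where t: "c = gcd A (int D) * t" ..
  obtain u v where uv: "u * A + v * int D = gcd A (int D)"
    using bezout_int by blast
  define x where "x = nat ((- t * u) mod int D)"
  have "int x = (- t * u) mod int D"
    using assms by (simp add: x_def)
  also have "\<dots> = - t * u - int D * ((- t * u) div int D)"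
    by (rule minus_mult_div_eq_mod[symmetric])
  finally have x: "int x = - t * u - int D * ((- t * u) div int D)" .
  have "c + int x * A = int D * (t * v - ((- t * u) div int D) * A)"
    unfolding t uv[symmetric] x by (simp add: algebra_simps)
  then show "\<exists>x::nat. int D dvd c + int x * A"
    by (metis dvd_triv_left)
qed

section \<open>Binomial equations in cyclic groups\<close>

lemma power_eq_power_iff_dvd_diff:
  fixes h :: "'a::field"
  assumes order: "\<And>i. h ^ i = 1 \<longleftrightarrow> D dvd i" and "D > 0"
  shows "h ^ i = h ^ j \<longleftrightarrow> int D dvd int i - int j"
proof -
  have "h \<noteq> 0"
    using order[of D] \<open>D > 0\<close> by (auto simp: zero_power)
  have *: "h ^ i = h ^ j \<longleftrightarrow> int D dvd int i - int j" if "j \<le> i" for i j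
  proof -
    have "h ^ i = h ^ j * h ^ (i - j)"
      using that by (simp flip: power_add)
    then have "h ^ i = h ^ j \<longleftrightarrow> h ^ (i - j) = 1"
      using \<open>h \<noteq> 0\<close> by auto
    also have "\<dots> \<longleftrightarrow> int D dvd int i - int j"
      using that by (simp add: order flip: int_dvd_int_iff)
    finally show ?thesis .
  qed
  show ?thesis
  proof (cases "j \<le> i")
    case False
    then show ?thesis
      using *[of i j] by (simp add: dvd_diff_commute[of _ "int i"] eq_commute)
  qed (rule *)
qed

lemma cyclic_exponent_equation_solvable_iff:
  fixes h :: "'a::field" and i j k l M :: nat
  assumes order: "\<And>i. h ^ i = 1 \<longleftrightarrow> (2 ^ M - 1) dvd i" and "M > 0"
  defines "E \<equiv> (2 ^ M - 1) div (2 ^ nat (gcd (int l - int k) (int M)) - 1)"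
  shows "(\<exists>x. h ^ (i + x * 2 ^ k) = h ^ (j + x * 2 ^ l)) \<longleftrightarrow> h ^ (i * E) = h ^ (j * E)"
proof -
  define D :: nat where "D = 2 ^ M - 1"
  define e where "e = nat (gcd (int l - int k) (int M))"
  define G :: nat where "G = 2 ^ e - 1"
  have "D > 0"
    unfolding D_def using \<open>M > 0\<close> by (rule two_power_minus_one_pos)
  have "e dvd M"
    using \<open>M > 0\<close> by (simp add: e_def flip: int_dvd_int_iff)
  then have "G dvd D"
    unfolding G_def D_def by (rule two_power_minus_one_dvd_nat)
  moreover have "E = D div G"
    by (simp add: E_def D_def G_def e_def)
  ultimately have DGE: "int D = int G * int E"
    by (simp flip: of_nat_mult)
  have "E > 0"
    using two_power_minus_one_div_pos[OF \<open>e dvd M\<close> \<open>M > 0\<close>] by (simp add: E_def e_def)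
  have power_eq: "h ^ a = h ^ b \<longleftrightarrow> int D dvd int a - int b" for a b
    using power_eq_power_iff_dvd_diff[OF order[folded D_def] \<open>D > 0\<close>] .
  have "(\<exists>x. h ^ (i + x * 2 ^ k) = h ^ (j + x * 2 ^ l)) \<longleftrightarrow>
        (\<exists>x::nat. int D dvd (int j - int i) + int x * (2 ^ l - 2 ^ k))"
  proof (intro ex_cong1)
    fix x :: nat
    have "int (i + x * 2 ^ k) - int (j + x * 2 ^ l) = - ((int j - int i) + int x * (2 ^ l - 2 ^ k))"
      by (simp add: algebra_simps)
    then show "h ^ (i + x * 2 ^ k) = h ^ (j + x * 2 ^ l) \<longleftrightarrow>
               int D dvd (int j - int i) + int x * (2 ^ l - 2 ^ k)"
      by (simp only: power_eq dvd_minus_iff)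
  qed
  also have "\<dots> \<longleftrightarrow> int G dvd int j - int i"
    using exists_nat_linear_congruence_iff[OF \<open>D > 0\<close>] gcd_two_power_diff[OF \<open>M > 0\<close>, of l k]
    by (simp add: D_def G_def e_def)
  also have "\<dots> \<longleftrightarrow> int D dvd (int i - int j) * int E"
    using \<open>E > 0\<close> by (simp add: DGE dvd_diff_commute[of _ "int j"])
  also have "\<dots> \<longleftrightarrow> h ^ (i * E) = h ^ (j * E)"
    by (simp add: power_eq left_diff_distrib)
  finally show ?thesis .
qed

lemma binomial_root_in_cyclic_iff:
  fixes h a b :: "'a::field" and k l M :: nat
  assumes order: "\<And>i. h ^ i = 1 \<longleftrightarrow> (2 ^ M - 1) dvd i" and "M > 0"
    and a: "a = 0 \<or> (\<exists>i. a = h ^ i)" and b: "b = 0 \<or> (\<exists>j. b = h ^ j)"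
  defines "E \<equiv> (2 ^ M - 1) div (2 ^ nat (gcd (int l - int k) (int M)) - 1)"
  shows "(\<exists>x. a * (h ^ x) ^ 2 ^ k = b * (h ^ x) ^ 2 ^ l) \<longleftrightarrow> a ^ E = b ^ E"
proof (cases "a = 0 \<or> b = 0")
  case True
  have "h \<noteq> 0"
    using order[of "2 ^ M - 1"] two_power_minus_one_pos[OF \<open>M > 0\<close>] by (auto simp: zero_power)
  moreover have "E > 0"
    unfolding E_def using \<open>M > 0\<close>
    by (intro two_power_minus_one_div_pos) (simp_all flip: int_dvd_int_iff)
  ultimately show ?thesis
    using True by (auto simp: power_0_left)
next
  case False
  then obtain i j where "a = h ^ i" "b = h ^ j"
    using a b by blast
  then show ?thesis
    using cyclic_exponent_equation_solvable_iff[OF order \<open>M > 0\<close>, of i k j l]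
    by (simp add: E_def power_add power_mult mult.commute)
qed

lemma finite_field_has_primitive_element:
  obtains g :: "'a::{finite,field}"
  where "\<And>x. x \<noteq> 0 \<Longrightarrow> \<exists>i. x = g ^ i"
    and "\<And>i. g ^ i = 1 \<longleftrightarrow> (card (UNIV::'a set) - 1) dvd i"
proof -
  define R where "R = (ring_of_type_algebra :: 'a ring)"
  interpret R: field R
    unfolding R_def by (rule field_from_type_algebra)
  have carrier: "carrier R = UNIV" and zero: "\<zero>\<^bsub>R\<^esub> = 0" and one: "\<one>\<^bsub>R\<^esub> = 1"
    by (simp_all add: R_def ring_of_type_algebra_def)
  have power: "x [^]\<^bsub>R\<^esub> i = x ^ i" for x :: 'a and i :: nat
    by (induction i) (simp_all add: R_def ring_of_type_algebra_def)
  \<comment> \<open>qualified since \<open>Ring_Divisibility\<close> defines another \<open>mult_of\<close>\<close>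
  interpret G: group "Multiplicative_Group.mult_of R"
    by (rule R.field_mult_group)
  have "finite (carrier R)"
    by (simp add: carrier)
  from R.finite_field_mult_group_has_gen[OF this]
  obtain g where g: "g \<in> carrier (Multiplicative_Group.mult_of R)"
    and gen: "carrier (Multiplicative_Group.mult_of R) = {g [^]\<^bsub>R\<^esub> i | i::nat. i \<in> UNIV}" ..
  have "G.ord g = card (carrier (Multiplicative_Group.mult_of R))"
    using G.generate_pow_card[OF g] G.generate_pow_on_finite_carrier[OF _ g] gen
    by (simp add: carrier Multiplicative_Group.nat_pow_mult_of)
  then have ord: "G.ord g = card (UNIV::'a set) - 1"
    by (simp add: carrier zero card_Diff_singleton)
  show ?thesis
  proof
    show "\<exists>i. x = g ^ i" if "x \<noteq> 0" for x
      using that gen by (auto simp: carrier zero power)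
    show "g ^ i = 1 \<longleftrightarrow> (card (UNIV::'a set) - 1) dvd i" for i
      using G.pow_eq_id[OF g, of i] by (simp add: Multiplicative_Group.nat_pow_mult_of power one ord)
  qed
qed

section \<open>Additive maps and subfields\<close>

lemma card_UNIV_eq_card_range_mult_card_kernel:
  fixes \<phi> :: "'a::{finite,ab_group_add} \<Rightarrow> 'b::ab_group_add"
  assumes additive: "\<And>x y. \<phi> (x + y) = \<phi> x + \<phi> y"
  shows "card (UNIV::'a set) = card (range \<phi>) * card {x. \<phi> x = 0}"
proof -
  have fibre: "\<phi> -` {\<phi> x} = (\<lambda>z. x + z) ` {z. \<phi> z = 0}" for x
  proof (rule Set.set_eqI, rule iffI)
    fix y assume "y \<in> \<phi> -` {\<phi> x}"
    then have "\<phi> (y - x) = 0"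
      using additive[of "y - x" x] by simp
    then show "y \<in> (\<lambda>z. x + z) ` {z. \<phi> z = 0}"
      by (auto intro: image_eqI[of _ _ "y - x"])
  qed (auto simp: additive)
  have "(UNIV::'a set) = (\<Union>y\<in>range \<phi>. \<phi> -` {y})"
    by blast
  then have "card (UNIV::'a set) = card (\<Union>y\<in>range \<phi>. \<phi> -` {y})"
    by simp
  also have "\<dots> = (\<Sum>y\<in>range \<phi>. card (\<phi> -` {y}))"
    by (rule card_UN_disjoint) auto
  also have "\<dots> = (\<Sum>y\<in>range \<phi>. card {z. \<phi> z = 0})"
    by (rule sum.cong) (auto simp: fibre card_image)
  finally show ?thesis
    by simp
qed

lemma one_in_subF [simp]: "(1::'a::field) \<in> subF q"
  by (simp add: subF_def)

lemma zero_in_subF [simp]: "(0::'a::field) \<in> subF (2 ^ e)"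
  by (simp add: subF_def)

lemma mult_in_subF: "x \<in> subF q \<Longrightarrow> y \<in> subF q \<Longrightarrow> (x::'a::field) * y \<in> subF q"
  by (simp add: subF_def power_mult_distrib)

lemma inverse_in_subF: "x \<in> subF q \<Longrightarrow> inverse (x::'a::field) \<in> subF q"
  by (simp add: subF_def power_inverse)

lemma divide_in_subF: "x \<in> subF q \<Longrightarrow> y \<in> subF q \<Longrightarrow> (x::'a::field) / y \<in> subF q"
  by (simp add: divide_inverse mult_in_subF inverse_in_subF)

lemma power_in_subF:
  assumes "x \<in> subF q"
  shows "(x::'a::field) ^ i \<in> subF q"
proof -
  have "(x ^ i) ^ q = (x ^ q) ^ i"
    by (simp add: mult.commute flip: power_mult)
  then show ?thesis
    using assms by (simp add: subF_def)
qed

lemma subF_power_power: "x \<in> subF q \<Longrightarrow> (x::'a::field) ^ (q ^ c) = x"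
  by (induction c) (simp_all add: subF_def power_mult)

lemma subF_power_two_power_mod:
  assumes "x \<in> subF (2 ^ e)"
  shows "(x::'a::field) ^ 2 ^ i = x ^ 2 ^ (i mod e)"
proof -
  have "x ^ 2 ^ i = (x ^ 2 ^ (i mod e)) ^ ((2 ^ e) ^ (i div e))"
    by (simp flip: power_mult power_add)
  then show ?thesis
    using subF_power_power[OF power_in_subF[OF assms]] by simp
qed

lemma bij_iff_no_translate_collision:
  fixes f :: "'a::{finite,ab_group_add} \<Rightarrow> 'a"
  shows "bij f \<longleftrightarrow> (\<forall>x u. u \<noteq> 0 \<longrightarrow> f (x + u) \<noteq> f x)"
proof -
  have "bij f \<longleftrightarrow> inj f"
    using finite_UNIV_inj_surj[of f] by (auto simp: bij_def)
  also have "\<dots> \<longleftrightarrow> (\<forall>x u. u \<noteq> 0 \<longrightarrow> f (x + u) \<noteq> f x)"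
  proof
    assume "inj f"
    then show "\<forall>x u. u \<noteq> 0 \<longrightarrow> f (x + u) \<noteq> f x"
      by (simp add: inj_eq)
  next
    assume no_collision: "\<forall>x u. u \<noteq> 0 \<longrightarrow> f (x + u) \<noteq> f x"
    show "inj f"
    proof (rule injI, rule ccontr)
      fix a b
      assume "f a = f b" "a \<noteq> b"
      then show False
        using no_collision[rule_format, of "a - b" b] by simp
    qed
  qed
  finally show ?thesis .
qed

section \<open>Fields of order \<open>2^N\<close>\<close>

locale binary_field =
  fixes N :: nat and g :: "'a::{finite,field}"
  assumes card_UNIV: "card (UNIV::'a set) = 2 ^ N"
    and power_generator: "x \<noteq> 0 \<Longrightarrow> \<exists>i. x = g ^ i"
    and order_generator: "g ^ i = 1 \<longleftrightarrow> (2 ^ N - 1) dvd i"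
begin

lemma N_pos: "N > 0"
proof -
  have "card {0::'a, 1} \<le> card (UNIV::'a set)"
    by (rule card_mono) simp_all
  then show ?thesis
    using card_UNIV by (cases N) auto
qed

lemma nat_gcd_N_dvd: "nat (gcd x (int N)) dvd N"
  using N_pos by (simp flip: int_dvd_int_iff)

lemma nat_gcd_N_pos: "nat (gcd x (int N)) > 0"
  using N_pos by simp

lemma generator_nonzero: "g \<noteq> 0"
  using order_generator[of "2 ^ N - 1"] two_power_minus_one_pos[OF N_pos] by (auto simp: zero_power)

lemma two_eq_zero [simp]: "(2::'a) = 0"
proof -
  obtain i where i: "(-1::'a) = g ^ i"
    using power_generator[of "-1"] by auto
  have "g ^ (i * 2) = 1"
    by (simp add: power_mult i[symmetric])
  then have "(2 ^ N - 1) dvd i * 2"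
    by (simp add: order_generator)
  moreover have "odd ((2::nat) ^ N - 1)"
    using N_pos by simp
  ultimately have "(2 ^ N - 1) dvd i"
    by (metis coprime_dvd_mult_left_iff coprime_left_2_iff_odd coprime_commute)
  then have "(-1::'a) = 1"
    using i order_generator by simp
  then show ?thesis
    by (metis add.right_inverse one_add_one)
qed

lemma add_self [simp]: "(x::'a) + x = 0"
  by (metis mult_2 two_eq_zero mult_zero_left)

lemma of_nat_odd: "odd j \<Longrightarrow> (of_nat j :: 'a) = 1"
  by (auto elim!: oddE)

lemma add_self_left [simp]: "(x::'a) + (x + y) = y"
  by (simp flip: add.assoc)

lemma add_eq_0_iff_eq: "(x::'a) + y = 0 \<longleftrightarrow> x = y"
  by (metis add_self add.left_cancel)

lemma add_eq_iff_eq_add: "(x::'a) + y = z \<longleftrightarrow> x = y + z"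
  by (metis add_self_left add.commute)

lemma add_power_two_power: "((x::'a) + y) ^ 2 ^ k = x ^ 2 ^ k + y ^ 2 ^ k"
proof (induction k)
  case (Suc k)
  have "(x + y) ^ 2 ^ Suc k = ((x + y) ^ 2 ^ k)\<^sup>2"
    by (simp add: power_mult[symmetric] mult.commute)
  also have "\<dots> = (x ^ 2 ^ k)\<^sup>2 + (y ^ 2 ^ k)\<^sup>2"
    by (simp add: Suc power2_eq_square algebra_simps)
  also have "\<dots> = x ^ 2 ^ Suc k + y ^ 2 ^ Suc k"
    by (simp add: power_mult[symmetric] mult.commute)
  finally show ?case .
qed simp

lemma sum_power_two_power: "(\<Sum>i\<in>A. f i :: 'a) ^ 2 ^ k = (\<Sum>i\<in>A. f i ^ 2 ^ k)"
  by (induction A rule: infinite_finite_induct) (simp_all add: add_power_two_power)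

lemma power_two_power_eq_iff [simp]: "(x::'a) ^ 2 ^ k = y ^ 2 ^ k \<longleftrightarrow> x = y"
proof
  assume "x ^ 2 ^ k = y ^ 2 ^ k"
  then have "(x + y) ^ 2 ^ k = 0"
    by (simp add: add_power_two_power)
  then show "x = y"
    by (simp add: add_eq_0_iff_eq)
qed simp

lemma power_two_power_N [simp]: "(x::'a) ^ 2 ^ N = x"
proof (cases "x = 0")
  case False
  then obtain i where i: "x = g ^ i"
    using power_generator by blast
  have "x ^ (2 ^ N - 1) = 1"
    unfolding i by (simp add: order_generator flip: power_mult mult.commute)
  then have "x ^ (2 ^ N - 1) * x = x"
    by simp
  then show ?thesis
    by (simp flip: power_Suc2)
qed simp

lemma power_two_power_N_mult [simp]: "(x::'a) ^ 2 ^ (N * c) = x"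
  by (induction c) (simp_all add: power_add power_mult)

lemma two_power_root: "((x::'a) ^ 2 ^ (N * k - k)) ^ 2 ^ k = x"
proof -
  have "k \<le> N * k"
    using N_pos by simp
  then show ?thesis
    by (simp flip: power_mult power_add)
qed

lemma add_in_subF: "x \<in> subF (2 ^ e) \<Longrightarrow> y \<in> subF (2 ^ e) \<Longrightarrow> (x::'a) + y \<in> subF (2 ^ e)"
  by (simp add: subF_def add_power_two_power)

lemma add_in_subF_iff: "y \<in> subF (2 ^ e) \<Longrightarrow> (x::'a) + y \<in> subF (2 ^ e) \<longleftrightarrow> x \<in> subF (2 ^ e)"
  by (metis add_in_subF add_self_left add.commute)

lemma power_two_power_in_subF_iff [simp]: "(x::'a) ^ 2 ^ k \<in> subF (2 ^ e) \<longleftrightarrow> x \<in> subF (2 ^ e)"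
  by (simp add: subF_def flip: power_mult) (simp add: mult.commute power_mult)

lemma all_notin_subF_power_two_power_iff:
  "(\<forall>u. u \<notin> subF (2 ^ e) \<longrightarrow> P ((u::'a) ^ 2 ^ k)) \<longleftrightarrow> (\<forall>v. v \<notin> subF (2 ^ e) \<longrightarrow> P v)"
  by (metis power_two_power_in_subF_iff two_power_root)

lemma subF_two_power_N [simp]: "subF (2 ^ N) = (UNIV::'a set)"
  by (simp add: subF_def)

lemma subF_two_power_gcd: "subF (2 ^ j) = (subF (2 ^ gcd j N) :: 'a set)"
proof (cases "j = 0")
  case False
  show ?thesis
  proof (rule Set.set_eqI, rule iffI)
    fix x :: 'a
    assume "x \<in> subF (2 ^ j)"
    obtain a b where ab: "j * a = N * b + gcd j N"
      using bezout_nat[OF False] by blast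
    have "((2::nat) ^ j) ^ a = 2 ^ gcd j N * 2 ^ (N * b)"
      by (simp add: ab power_add flip: power_mult)
    then have "x ^ (2 ^ j) ^ a = (x ^ 2 ^ gcd j N) ^ 2 ^ (N * b)"
      by (simp add: power_mult)
    then have "x = x ^ 2 ^ gcd j N"
      using \<open>x \<in> subF (2 ^ j)\<close> by (simp add: subF_power_power)
    then show "x \<in> subF (2 ^ gcd j N)"
      by (simp add: subF_def)
  next
    fix x :: 'a
    assume "x \<in> subF (2 ^ gcd j N)"
    then have "x ^ (2 ^ gcd j N) ^ (j div gcd j N) = x"
      by (rule subF_power_power)
    then show "x \<in> subF (2 ^ j)"
      by (simp add: subF_def flip: power_mult)
  qed
qed (simp add: subF_def)

lemma power_two_power_eq_iff_subF:
  "(x::'a) ^ 2 ^ k = x ^ 2 ^ l \<longleftrightarrow> x \<in> subF (2 ^ nat (gcd (int l - int k) (int N)))"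
proof -
  have *: "x ^ 2 ^ k = x ^ 2 ^ l \<longleftrightarrow> x \<in> subF (2 ^ nat (gcd (int l - int k) (int N)))"
    if "k \<le> l" for k l
  proof -
    have "x ^ 2 ^ l = (x ^ 2 ^ k) ^ 2 ^ (l - k)"
      using that by (simp flip: power_mult power_add)
    then have "x ^ 2 ^ k = x ^ 2 ^ l \<longleftrightarrow> x ^ 2 ^ k \<in> subF (2 ^ (l - k))"
      by (auto simp: subF_def)
    also have "\<dots> \<longleftrightarrow> x \<in> subF (2 ^ gcd (l - k) N)"
      by (simp flip: subF_two_power_gcd)
    also have "gcd (l - k) N = nat (gcd (int l - int k) (int N))"
      using that by (metis gcd_int_int_eq nat_int of_nat_diff)
    finally show ?thesis .
  qed
  show ?thesis
  proof (cases "k \<le> l")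
    case False
    then show ?thesis
      using *[of l k] by (simp add: gcd_diff_commute_int[of "int k"] eq_commute)
  qed (rule *)
qed

definition subfield_generator :: "nat \<Rightarrow> 'a" where
  "subfield_generator e = g ^ ((2 ^ N - 1) div (2 ^ e - 1))"

lemma order_subfield_generator:
  assumes "e dvd N" "e > 0"
  shows "subfield_generator e ^ i = 1 \<longleftrightarrow> (2 ^ e - 1) dvd i"
proof -
  define R where "R = ((2::nat) ^ N - 1) div (2 ^ e - 1)"
  have N_eq: "(2::nat) ^ N - 1 = R * (2 ^ e - 1)"
    unfolding R_def using two_power_minus_one_dvd_nat[OF assms(1)] by simp
  have "R > 0"
    unfolding R_def using assms(1) N_pos by (rule two_power_minus_one_div_pos)
  have "subfield_generator e ^ i = 1 \<longleftrightarrow> (2 ^ N - 1) dvd R * i"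
    by (simp add: subfield_generator_def R_def order_generator flip: power_mult)
  also have "\<dots> \<longleftrightarrow> R * (2 ^ e - 1) dvd R * i"
    by (simp only: N_eq)
  finally show ?thesis
    using \<open>R > 0\<close> by simp
qed

lemma subfield_generator_nonzero: "subfield_generator e \<noteq> 0"
  by (simp add: subfield_generator_def generator_nonzero)

lemma subF_two_power_iff:
  assumes "e dvd N" "e > 0"
  shows "x \<in> subF (2 ^ e) \<longleftrightarrow> x = 0 \<or> (\<exists>i. x = subfield_generator e ^ i)"
proof
  assume "x \<in> subF (2 ^ e)"
  show "x = 0 \<or> (\<exists>i. x = subfield_generator e ^ i)"
  proof (cases "x = 0")
    case False
    then obtain j where j: "x = g ^ j"
      using power_generator by blast
    define R where "R = ((2::nat) ^ N - 1) div (2 ^ e - 1)"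
    have N_eq: "(2::nat) ^ N - 1 = R * (2 ^ e - 1)"
      unfolding R_def using two_power_minus_one_dvd_nat[OF assms(1)] by simp
    have "j * 2 ^ e = j * (2 ^ e - 1) + j"
      by (metis Suc_diff_1 mult_Suc_right add.commute pos2 zero_less_power)
    then have "g ^ (j * (2 ^ e - 1)) * x = 1 * x"
      using \<open>x \<in> subF (2 ^ e)\<close> by (simp add: subF_def j flip: power_mult power_add)
    then have "(2 ^ N - 1) dvd j * (2 ^ e - 1)"
      using \<open>x \<noteq> 0\<close> order_generator by simp
    then have "R * (2 ^ e - 1) dvd j * (2 ^ e - 1)"
      by (simp only: N_eq)
    then have "R dvd j"
      using two_power_minus_one_pos[OF assms(2)] by simp
    then obtain i where "j = R * i" ..
    then show ?thesis
      by (auto simp: j subfield_generator_def R_def power_mult)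
  qed simp
next
  have "subfield_generator e ^ (2 ^ e - 1) = 1"
    using order_subfield_generator[OF assms] by simp
  then have "subfield_generator e ^ Suc (2 ^ e - 1) = subfield_generator e"
    by (simp only: power_Suc2) simp
  then have "subfield_generator e \<in> subF (2 ^ e)"
    by (simp add: subF_def)
  then show "x = 0 \<or> (\<exists>i. x = subfield_generator e ^ i) \<Longrightarrow> x \<in> subF (2 ^ e)"
    by (auto intro: power_in_subF)
qed

lemma subF_two_power_subset_iff:
  assumes "e dvd N" "e > 0"
  shows "subF (2 ^ e) \<subseteq> (subF (2 ^ f) :: 'a set) \<longleftrightarrow> e dvd f"
proof
  assume "subF (2 ^ e) \<subseteq> (subF (2 ^ f) :: 'a set)"
  then have "subfield_generator e \<in> subF (2 ^ f)"
    using subF_two_power_iff[OF assms, of "subfield_generator e"] by (auto intro: exI[of _ 1])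
  then have "subfield_generator e ^ (2 ^ f - 1) * subfield_generator e = 1 * subfield_generator e"
    by (simp add: subF_def flip: power_Suc2)
  then have "(2::nat) ^ e - 1 dvd 2 ^ f - 1"
    using subfield_generator_nonzero by (simp add: order_subfield_generator[OF assms])
  then show "e dvd f"
    by (simp add: two_power_minus_one_dvd_iff flip: int_dvd_int_iff)
next
  assume "e dvd f"
  then obtain c where "f = e * c" ..
  then show "subF (2 ^ e) \<subseteq> (subF (2 ^ f) :: 'a set)"
    by (auto simp: subF_def power_mult subF_power_power)
qed

lemma binomial_root_in_subF_iff:
  fixes a b :: 'a
  assumes "e dvd N" "e > 0" and "a \<in> subF (2 ^ e)" "b \<in> subF (2 ^ e)"
  shows "(\<exists>u\<in>subF (2 ^ e). u \<noteq> 0 \<and> a * u ^ 2 ^ k = b * u ^ 2 ^ l) \<longleftrightarrow>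
    a ^ ((2 ^ e - 1) div (2 ^ nat (gcd (int l - int k) (int e)) - 1)) =
    b ^ ((2 ^ e - 1) div (2 ^ nat (gcd (int l - int k) (int e)) - 1))"
proof -
  have "(\<exists>u\<in>subF (2 ^ e). u \<noteq> 0 \<and> a * u ^ 2 ^ k = b * u ^ 2 ^ l) \<longleftrightarrow>
    (\<exists>x. a * (subfield_generator e ^ x) ^ 2 ^ k = b * (subfield_generator e ^ x) ^ 2 ^ l)"
    (is "?lhs \<longleftrightarrow> (\<exists>x. ?P (subfield_generator e ^ x))")
  proof
    assume ?lhs
    then show "\<exists>x. ?P (subfield_generator e ^ x)"
      using subF_two_power_iff[OF assms(1,2)] by blast
  next
    assume "\<exists>x. ?P (subfield_generator e ^ x)"
    then obtain x where "?P (subfield_generator e ^ x)" ..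
    moreover have "subfield_generator e ^ x \<in> subF (2 ^ e)"
      using subF_two_power_iff[OF assms(1,2)] by blast
    ultimately show ?lhs
      using subfield_generator_nonzero by (auto intro!: bexI[of _ "subfield_generator e ^ x"])
  qed
  then show ?thesis
    using binomial_root_in_cyclic_iff[OF order_subfield_generator[OF assms(1,2)] assms(2)]
      assms(3,4) subF_two_power_iff[OF assms(1,2)] by simp
qed

lemma binomial_root_iff:
  fixes a b :: 'a
  shows "(\<exists>u. u \<noteq> 0 \<and> a * u ^ 2 ^ k = b * u ^ 2 ^ l) \<longleftrightarrow>
    a ^ ((2 ^ N - 1) div (2 ^ nat (gcd (int l - int k) (int N)) - 1)) =
    b ^ ((2 ^ N - 1) div (2 ^ nat (gcd (int l - int k) (int N)) - 1))"
  using binomial_root_in_subF_iff[of N a b k l] N_pos by simp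

end

section \<open>The trace of an extension of odd degree\<close>

locale odd_binary_extension = binary_field "m * n" g
  for m n :: nat and g :: "'a::{finite,field}" +
  assumes m_pos: "m > 0" and n_odd: "odd n"
begin

abbreviation Fq :: "'a set" where "Fq \<equiv> subF (2 ^ m)"

abbreviation T :: "'a \<Rightarrow> 'a" where "T \<equiv> Tr (2 ^ m) n"

lemma n_pos: "n > 0"
  using n_odd by (rule odd_pos)

lemma power_q_power_n [simp]: "(x::'a) ^ (2 ^ m) ^ n = x"
  by (simp flip: power_mult)

lemma Tr_zero [simp]: "T 0 = 0"
  by (simp add: Tr_def power_0_left)

lemma Tr_add: "T (x + y) = T x + T y"
  by (simp add: Tr_def sum.distrib add_power_two_power flip: power_mult)

lemma Tr_mult_Fq: "c \<in> Fq \<Longrightarrow> T (c * y) = c * T y"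
  by (simp add: Tr_def power_mult_distrib subF_power_power sum_distrib_left)

lemma Tr_power_two_power: "T (y ^ 2 ^ k) = T y ^ 2 ^ k"
  by (simp add: Tr_def sum_power_two_power mult.commute flip: power_mult)

lemma Tr_power_q: "T (y ^ 2 ^ m) = T y"
proof -
  define f where "f i = y ^ (2 ^ m) ^ i" for i
  have "T (y ^ 2 ^ m) = (\<Sum>i<n. f (Suc i))"
    by (simp add: Tr_def f_def mult.commute flip: power_mult)
  also have "\<dots> = (\<Sum>i<n. f i)"
  proof -
    have "f 0 + (\<Sum>i<n. f (Suc i)) = (\<Sum>i<Suc n. f i)"
      by (rule sum.lessThan_Suc_shift[symmetric])
    also have "\<dots> = f 0 + (\<Sum>i<n. f i)"
      by (simp add: f_def add.commute)
    finally show ?thesis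
      by simp
  qed
  finally show ?thesis
    by (simp add: Tr_def f_def)
qed

lemma Tr_power_q_power: "T (y ^ (2 ^ m) ^ t) = T y"
proof (induction t)
  case (Suc t)
  have "y ^ (2 ^ m) ^ Suc t = (y ^ (2 ^ m) ^ t) ^ 2 ^ m"
    by (simp only: power_Suc2 power_mult)
  then show ?case
    using Suc by (simp add: Tr_power_q)
qed simp

lemma Tr_in_Fq: "T y \<in> Fq"
  by (simp add: subF_def Tr_power_q flip: Tr_power_two_power)

lemma Tr_Fq: "c \<in> Fq \<Longrightarrow> T c = c"
  using n_odd by (simp add: Tr_def subF_power_power of_nat_odd)

lemma Tr_nonzero: "\<exists>y. T y \<noteq> 0"
proof (rule ccontr)
  assume "\<nexists>y. T y \<noteq> 0"
  define P :: "'a poly" where "P = (\<Sum>i<n. monom 1 ((2 ^ m) ^ i))"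
  have roots: "{x. poly P x = 0} = UNIV"
    using \<open>\<nexists>y. T y \<noteq> 0\<close> by (simp add: P_def Tr_def poly_sum poly_monom)
  have q: "(2::nat) ^ m > 1"
    using m_pos by (rule one_less_power[rotated]) simp
  have "coeff P 1 = (\<Sum>i<n. if i = 0 then 1 else 0)"
    unfolding P_def coeff_sum
  proof (rule sum.cong)
    fix i
    have "((2::nat) ^ m) ^ i = 1 \<longleftrightarrow> i = 0"
      using q by (auto simp: power_eq_1_iff)
    then show "coeff (monom (1::'a) ((2 ^ m) ^ i)) 1 = (if i = 0 then 1 else 0)"
      by auto
  qed simp
  also have "\<dots> = 1"
    using n_pos by simp
  finally have "P \<noteq> 0"
    by auto
  have "degree P \<le> (2 ^ m) ^ (n - 1)"
    unfolding P_def
  proof (rule degree_sum_le)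
    fix i assume "i \<in> {..<n}"
    then have "((2::nat) ^ m) ^ i \<le> (2 ^ m) ^ (n - 1)"
      using q by (intro power_increasing) auto
    then show "degree (monom (1::'a) ((2 ^ m) ^ i)) \<le> (2 ^ m) ^ (n - 1)"
      using degree_monom_le order_trans by blast
  qed simp
  moreover have "card {x. poly P x = 0} \<le> degree P"
    using \<open>P \<noteq> 0\<close> by (rule card_poly_roots_bound)
  moreover have "((2::nat) ^ m) ^ (n - 1) < (2 ^ m) ^ n"
    using q n_pos by (intro power_strict_increasing) auto
  ultimately have "card (UNIV::'a set) < (2 ^ m) ^ n"
    unfolding roots by linarith
  then show False
    by (simp add: card_UNIV power_mult)
qed

lemma range_Tr: "range T = Fq"
proof (intro antisym subsetI)
  fix c assume "c \<in> Fq"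
  obtain y where "T y \<noteq> 0"
    using Tr_nonzero by blast
  have "c / T y \<in> Fq"
    using \<open>c \<in> Fq\<close> Tr_in_Fq by (rule divide_in_subF)
  then have "T (c / T y * y) = c / T y * T y"
    by (rule Tr_mult_Fq)
  also have "\<dots> = c"
    using \<open>T y \<noteq> 0\<close> by simp
  finally show "c \<in> range T"
    by (rule range_eqI[OF sym])
qed (auto simp: Tr_in_Fq)

lemma exists_Tr_mult_eq_iff:
  assumes "w \<noteq> 0"
  shows "(\<exists>x. T (x * w) = c) \<longleftrightarrow> c \<in> Fq"
proof
  assume "c \<in> Fq"
  then have "c \<in> range T"
    using range_Tr by simp
  then obtain y where "c = T y" ..
  then have "T (y / w * w) = c"
    using assms by simp
  then show "\<exists>x. T (x * w) = c" ..
qed (auto simp: Tr_in_Fq)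

lemma card_Fq_pos: "card Fq > 0"
proof -
  have "Fq \<noteq> {}"
    by (metis empty_iff zero_in_subF)
  then show ?thesis
    by (simp add: card_gt_0_iff)
qed

lemma range_add_power_q_power:
  assumes kernel: "\<And>v. v ^ (2 ^ m) ^ t = v \<Longrightarrow> v \<in> Fq"
  shows "range (\<lambda>v. v + v ^ (2 ^ m) ^ t) = {y. T y = 0}"
proof -
  define \<phi> where "\<phi> v = v + v ^ (2 ^ m) ^ t" for v :: 'a
  have additive: "\<phi> (x + y) = \<phi> x + \<phi> y" for x y
    by (simp add: \<phi>_def add_power_two_power algebra_simps flip: power_mult)
  have "{v. \<phi> v = 0} = Fq"
    using kernel by (auto simp: \<phi>_def add_eq_0_iff_eq subF_power_power)
  have "range \<phi> \<subseteq> {y. T y = 0}"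
    by (auto simp: \<phi>_def Tr_add Tr_power_q_power)
  moreover have "card (UNIV::'a set) = card (range \<phi>) * card Fq"
    using card_UNIV_eq_card_range_mult_card_kernel[of \<phi>, OF additive] \<open>{v. \<phi> v = 0} = Fq\<close>
    by simp
  moreover have "card (UNIV::'a set) = card Fq * card {y. T y = 0}"
    using card_UNIV_eq_card_range_mult_card_kernel[of T, OF Tr_add] range_Tr by simp
  ultimately have "card Fq * card (range \<phi>) = card Fq * card {y. T y = 0}"
    by (metis mult.commute)
  then have "card (range \<phi>) = card {y. T y = 0}"
    using card_Fq_pos by auto
  then show ?thesis
    unfolding \<phi>_def[symmetric] using \<open>range \<phi> \<subseteq> {y. T y = 0}\<close> by (intro card_subset_eq) simp_all
qed

lemma scaled_add_power_q_power_preserves_complement_iff: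
  assumes kernel: "\<And>v. v ^ (2 ^ m) ^ t = v \<Longrightarrow> v \<in> Fq" and "a \<noteq> 0"
  shows "(\<forall>v. v \<notin> Fq \<longrightarrow> a * (v + v ^ (2 ^ m) ^ t) \<notin> Fq) \<longleftrightarrow> T (inverse a) \<noteq> 0"
proof -
  define \<phi> where "\<phi> v = v + v ^ (2 ^ m) ^ t" for v :: 'a
  have \<phi>_eq_0: "\<phi> v = 0 \<longleftrightarrow> v \<in> Fq" for v
    using kernel by (auto simp: \<phi>_def add_eq_0_iff_eq subF_power_power)
  have range_\<phi>: "range \<phi> = {y. T y = 0}"
    unfolding \<phi>_def using kernel by (rule range_add_power_q_power)
  show ?thesis
    unfolding \<phi>_def[symmetric]
  proof
    assume preserves: "\<forall>v. v \<notin> Fq \<longrightarrow> a * \<phi> v \<notin> Fq"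
    show "T (inverse a) \<noteq> 0"
    proof
      assume "T (inverse a) = 0"
      then have "inverse a \<in> range \<phi>"
        using range_\<phi> by simp
      then obtain v where v: "inverse a = \<phi> v" ..
      then have "v \<notin> Fq"
        using \<phi>_eq_0 \<open>a \<noteq> 0\<close> by force
      moreover have "a * \<phi> v = 1"
        using v[symmetric] \<open>a \<noteq> 0\<close> by simp
      ultimately show False
        using preserves one_in_subF by metis
    qed
  next
    assume "T (inverse a) \<noteq> 0"
    show "\<forall>v. v \<notin> Fq \<longrightarrow> a * \<phi> v \<notin> Fq"
    proof (intro allI impI notI)
      fix v
      assume "v \<notin> Fq" and "a * \<phi> v \<in> Fq"
      have "T (\<phi> v) = T ((a * \<phi> v) * inverse a)"
        using \<open>a \<noteq> 0\<close> by (simp add: field_simps)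
      also have "\<dots> = a * \<phi> v * T (inverse a)"
        using \<open>a * \<phi> v \<in> Fq\<close> by (rule Tr_mult_Fq)
      finally have "T (\<phi> v) \<noteq> 0"
        using \<open>v \<notin> Fq\<close> \<phi>_eq_0 \<open>a \<noteq> 0\<close> \<open>T (inverse a) \<noteq> 0\<close> by auto
      then show False
        using range_\<phi> by blast
    qed
  qed
qed

lemma additive_preimage_Fq:
  fixes L :: "'a \<Rightarrow> 'a"
  assumes additive: "\<And>x y. L (x + y) = L x + L y" and "L -` Fq \<subseteq> Fq"
  shows "L -` Fq = Fq"
proof -
  \<comment> \<open>rank-nullity for \<open>\<psi>\<close>, whose kernel is \<open>Fq\<close>, and for \<open>\<psi> \<circ> L\<close>, whose range is smaller\<close>
  define \<psi> where "\<psi> y = y ^ 2 ^ m + y" for y :: 'a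
  have \<psi>_additive: "\<psi> (x + y) = \<psi> x + \<psi> y" for x y
    by (simp add: \<psi>_def add_power_two_power algebra_simps)
  have kernel_\<psi>: "{y. \<psi> y = 0} = Fq"
    by (auto simp: \<psi>_def add_eq_0_iff_eq subF_def)
  have kernel_\<psi>L: "{u. \<psi> (L u) = 0} = L -` Fq"
    by (auto simp: \<psi>_def add_eq_0_iff_eq subF_def)
  have "card (range \<psi>) * card Fq = card (range (\<psi> \<circ> L)) * card (L -` Fq)"
    using card_UNIV_eq_card_range_mult_card_kernel[of \<psi>, OF \<psi>_additive]
      card_UNIV_eq_card_range_mult_card_kernel[of "\<psi> \<circ> L"]
    by (simp add: additive \<psi>_additive kernel_\<psi> kernel_\<psi>L)
  also have "\<dots> \<le> card (range \<psi>) * card (L -` Fq)"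
    by (intro mult_le_mono1 card_mono) auto
  finally have "card (range \<psi>) * card Fq \<le> card (range \<psi>) * card (L -` Fq)" .
  moreover have "card (range \<psi>) > 0"
    by (simp add: card_gt_0_iff)
  ultimately have "card Fq \<le> card (L -` Fq)"
    by simp
  then show ?thesis
    using assms(2) by (intro card_seteq) auto
qed

section \<open>A permutation criterion\<close>

lemma power_q_power_pred_n: "((x::'a) ^ (2 ^ m) ^ (n - 1)) ^ 2 ^ m = x"
proof -
  have "(x ^ (2 ^ m) ^ (n - 1)) ^ 2 ^ m = x ^ (2 ^ m) ^ Suc (n - 1)"
    by (simp only: power_mult power_Suc2)
  also have "Suc (n - 1) = n"
    using n_pos by simp
  finally show ?thesis
    by (simp only: power_q_power_n)
qed

text \<open>\<open>T (x^q * u + x * u^q) = T (x * polar_factor u)\<close>, because \<open>T (y^q) = T y\<close>.\<close>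

definition polar_factor :: "'a \<Rightarrow> 'a" where
  "polar_factor u = u ^ (2 ^ m) ^ (n - 1) + u ^ 2 ^ m"

lemma polar_factor_eq_0_iff: "polar_factor u = 0 \<longleftrightarrow> u \<in> Fq"
proof
  assume "polar_factor u = 0"
  then have "u ^ (2 ^ m) ^ (n - 1) = u ^ 2 ^ m"
    by (simp add: polar_factor_def add_eq_0_iff_eq)
  then have "(u ^ (2 ^ m) ^ (n - 1)) ^ 2 ^ m = (u ^ 2 ^ m) ^ 2 ^ m"
    by (rule arg_cong)
  then have "u = (u ^ 2 ^ m) ^ 2 ^ m"
    by (simp only: power_q_power_pred_n)
  also have "\<dots> = u ^ 2 ^ (2 * m)"
    by (simp add: mult_2 power_add power_mult)
  finally have "u \<in> subF (2 ^ (2 * m))"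
    by (simp add: subF_def)
  also have "subF (2 ^ (2 * m)) = Fq"
  proof -
    have "gcd (2 * m) (m * n) = m"
      using n_odd by (simp add: gcd_mult_distrib_nat[symmetric] mult.commute)
    then show ?thesis
      by (simp add: subF_two_power_gcd[of "2 * m"])
  qed
  finally show "u \<in> Fq" .
next
  assume "u \<in> Fq"
  then show "polar_factor u = 0"
    by (simp add: polar_factor_def subF_power_power subF_def)
qed

lemma Tr_power_q_plus_one_add:
  "T ((x + u) ^ (2 ^ m + 1)) = T (x ^ (2 ^ m + 1)) + T (u ^ (2 ^ m + 1)) + T (x * polar_factor u)"
proof -
  have "(x + u) ^ (2 ^ m + 1) = x ^ (2 ^ m + 1) + u ^ (2 ^ m + 1) + (x ^ 2 ^ m * u + x * u ^ 2 ^ m)"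
    by (simp add: add_power_two_power algebra_simps)
  moreover have "T (x ^ 2 ^ m * u) = T (x * u ^ (2 ^ m) ^ (n - 1))"
  proof -
    have "(x * u ^ (2 ^ m) ^ (n - 1)) ^ 2 ^ m = x ^ 2 ^ m * u"
      by (simp only: power_mult_distrib power_q_power_pred_n)
    then show ?thesis
      by (metis Tr_power_q)
  qed
  ultimately show ?thesis
    by (simp add: Tr_add polar_factor_def distrib_left add.commute)
qed

lemma translate_collision_iff:
  fixes L :: "'a \<Rightarrow> 'a"
  assumes additive: "\<And>x y. L (x + y) = L x + L y"
  defines "f \<equiv> \<lambda>x. T (x ^ (2 ^ m + 1)) + L x"
  shows "(\<exists>x. f (x + u) = f x) \<longleftrightarrow> (if u \<in> Fq then L u = u\<^sup>2 else L u \<in> Fq)"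
proof -
  have collision_iff: "f (x + u) = f x \<longleftrightarrow> T (x * polar_factor u) = L u + T (u ^ (2 ^ m + 1))" for x
  proof -
    have "f (x + u) = f x + (T (x * polar_factor u) + (L u + T (u ^ (2 ^ m + 1))))"
      unfolding f_def Tr_power_q_plus_one_add additive by (simp only: ac_simps)
    then show ?thesis
      by (simp add: add_eq_0_iff_eq)
  qed
  show ?thesis
  proof (cases "u \<in> Fq")
    case True
    have "u ^ (2 ^ m + 1) = u\<^sup>2"
      using True by (simp add: subF_def power2_eq_square)
    moreover have "u\<^sup>2 \<in> Fq"
      using True by (rule power_in_subF)
    ultimately have "T (u ^ (2 ^ m + 1)) = u\<^sup>2"
      by (simp add: Tr_Fq)
    moreover have "polar_factor u = 0"
      using True by (simp add: polar_factor_eq_0_iff)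
    ultimately show ?thesis
      using True collision_iff by (auto simp: add_eq_0_iff_eq)
  next
    case False
    then have "polar_factor u \<noteq> 0"
      by (simp add: polar_factor_eq_0_iff)
    then have "(\<exists>x. T (x * polar_factor u) = L u + T (u ^ (2 ^ m + 1))) \<longleftrightarrow>
        L u + T (u ^ (2 ^ m + 1)) \<in> Fq"
      by (rule exists_Tr_mult_eq_iff)
    then show ?thesis
      using False collision_iff by (simp add: add_in_subF_iff Tr_in_Fq)
  qed
qed

theorem bij_Tr_power_q_plus_one_add_iff:
  fixes L :: "'a \<Rightarrow> 'a"
  assumes additive: "\<And>x y. L (x + y) = L x + L y"
  shows "bij (\<lambda>x. T (x ^ (2 ^ m + 1)) + L x) \<longleftrightarrow>
    (\<forall>u. u \<notin> Fq \<longrightarrow> L u \<notin> Fq) \<and> (\<forall>u\<in>Fq. u \<noteq> 0 \<longrightarrow> L u \<noteq> u\<^sup>2)"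
proof -
  have "bij (\<lambda>x. T (x ^ (2 ^ m + 1)) + L x) \<longleftrightarrow>
    (\<forall>u. u \<noteq> 0 \<longrightarrow> \<not> (\<exists>x. T ((x + u) ^ (2 ^ m + 1)) + L (x + u) = T (x ^ (2 ^ m + 1)) + L x))"
    unfolding bij_iff_no_translate_collision by blast
  also have "\<dots> \<longleftrightarrow> (\<forall>u. u \<noteq> 0 \<longrightarrow> \<not> (if u \<in> Fq then L u = u\<^sup>2 else L u \<in> Fq))"
    by (simp only: translate_collision_iff[of L, OF additive])
  also have "\<dots> \<longleftrightarrow> (\<forall>u. u \<notin> Fq \<longrightarrow> L u \<notin> Fq) \<and> (\<forall>u\<in>Fq. u \<noteq> 0 \<longrightarrow> L u \<noteq> u\<^sup>2)"
    by (metis zero_in_subF)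
  finally show ?thesis .
qed

end

section \<open>Linearized binomials\<close>

definition lin_binomial :: "'a::field \<Rightarrow> 'a \<Rightarrow> nat \<Rightarrow> nat \<Rightarrow> 'a \<Rightarrow> 'a" where
  "lin_binomial a b k l u = a * u ^ 2 ^ k + b * u ^ 2 ^ l"

lemma lin_binomial_zero [simp]: "lin_binomial a b k l 0 = 0"
  by (simp add: lin_binomial_def power_0_left)

lemma lin_binomial_mult_fixed:
  "w ^ 2 ^ k = w ^ 2 ^ l \<Longrightarrow> lin_binomial a b k l (u * w) = w ^ 2 ^ k * lin_binomial a b k l u"
  by (simp add: lin_binomial_def algebra_simps)

lemma binomial_root_ratio:
  fixes a b u v :: "'a::field"
  assumes "a \<noteq> 0" "b \<noteq> 0" "v \<noteq> 0"
    and "a * u ^ 2 ^ k = b * u ^ 2 ^ l" and "a * v ^ 2 ^ k = b * v ^ 2 ^ l"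
  shows "(u / v) ^ 2 ^ k = (u / v) ^ 2 ^ l"
proof -
  have "(a * b) * (u ^ 2 ^ k * v ^ 2 ^ l) = (a * u ^ 2 ^ k) * (b * v ^ 2 ^ l)"
    by (simp add: ac_simps)
  also have "\<dots> = (a * b) * (u ^ 2 ^ l * v ^ 2 ^ k)"
    using assms(4,5) by (simp add: ac_simps)
  finally have "u ^ 2 ^ k * v ^ 2 ^ l = u ^ 2 ^ l * v ^ 2 ^ k"
    using assms(1,2) by simp
  then show ?thesis
    using assms(3) by (simp add: divide_eq_eq field_simps)
qed

context binary_field
begin

lemma lin_binomial_add: "lin_binomial a b k l (x + y) = lin_binomial a b k l x + lin_binomial a b k l (y::'a)"
  by (simp add: lin_binomial_def add_power_two_power algebra_simps)

lemma lin_binomial_eq_0_iff: "lin_binomial a b k l u = 0 \<longleftrightarrow> a * u ^ 2 ^ k = b * (u::'a) ^ 2 ^ l"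
  by (simp add: lin_binomial_def add_eq_0_iff_eq)

lemma lin_binomial_in_subF:
  "a \<in> subF (2 ^ e) \<Longrightarrow> b \<in> subF (2 ^ e) \<Longrightarrow> c \<in> subF (2 ^ e) \<Longrightarrow>
    lin_binomial a b k l (c::'a) \<in> subF (2 ^ e)"
  by (simp add: lin_binomial_def add_in_subF mult_in_subF power_in_subF)

lemma inj_lin_binomial_iff:
  "inj (lin_binomial a b k l) \<longleftrightarrow> (\<forall>u. u \<noteq> 0 \<longrightarrow> lin_binomial a b k l (u::'a) \<noteq> 0)"
proof
  assume "inj (lin_binomial a b k l)"
  then show "\<forall>u. u \<noteq> 0 \<longrightarrow> lin_binomial a b k l u \<noteq> 0"
    using inj_eq[of "lin_binomial a b k l" _ 0] by (simp add: lin_binomial_def power_0_left)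
next
  assume "\<forall>u. u \<noteq> 0 \<longrightarrow> lin_binomial a b k l (u::'a) \<noteq> 0"
  then show "inj (lin_binomial a b k l)"
    by (metis injI lin_binomial_add add_self add_eq_0_iff_eq)
qed

lemma lin_binomial_eq_0_iff_div_in_subF:
  fixes a b u u0 :: 'a
  assumes "a \<noteq> 0" "b \<noteq> 0" "u0 \<noteq> 0" and root: "lin_binomial a b k l u0 = 0"
  shows "lin_binomial a b k l u = 0 \<longleftrightarrow> u / u0 \<in> subF (2 ^ nat (gcd (int l - int k) (int N)))"
proof
  assume "lin_binomial a b k l u = 0"
  then have "a * u ^ 2 ^ k = b * u ^ 2 ^ l"
    by (simp add: lin_binomial_eq_0_iff)
  moreover have "a * u0 ^ 2 ^ k = b * u0 ^ 2 ^ l"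
    using root by (simp add: lin_binomial_eq_0_iff)
  ultimately have "(u / u0) ^ 2 ^ k = (u / u0) ^ 2 ^ l"
    by (rule binomial_root_ratio[OF assms(1-3)])
  then show "u / u0 \<in> subF (2 ^ nat (gcd (int l - int k) (int N)))"
    by (simp only: power_two_power_eq_iff_subF)
next
  assume "u / u0 \<in> subF (2 ^ nat (gcd (int l - int k) (int N)))"
  then have "(u / u0) ^ 2 ^ k = (u / u0) ^ 2 ^ l"
    by (simp only: power_two_power_eq_iff_subF)
  then have "lin_binomial a b k l (u0 * (u / u0)) = (u / u0) ^ 2 ^ k * lin_binomial a b k l u0"
    by (rule lin_binomial_mult_fixed)
  then show "lin_binomial a b k l u = 0"
    using root \<open>u0 \<noteq> 0\<close> by simp
qed

end

context odd_binary_extension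
begin

lemma lin_binomial_Fq:
  assumes "k mod m = l mod m" "c \<in> Fq"
  shows "lin_binomial a b k l c = (a + b) * c ^ 2 ^ k"
  using subF_power_two_power_mod[OF assms(2), of k] subF_power_two_power_mod[OF assms(2), of l] assms(1)
  by (simp add: lin_binomial_def algebra_simps)

lemma Tr_lin_binomial: "a \<in> Fq \<Longrightarrow> b \<in> Fq \<Longrightarrow> T (lin_binomial a b k l y) = lin_binomial a b k l (T y)"
  by (simp add: lin_binomial_def Tr_add Tr_mult_Fq Tr_power_two_power)

lemma congruent_lin_binomial_onto_Fq:
  assumes kl: "k mod m = l mod m" and "a + b \<in> Fq" "a + b \<noteq> 0" "c \<in> Fq"
  shows "\<exists>r\<in>Fq. lin_binomial a b k l r = c"
proof
  define r where "r = (c / (a + b)) ^ 2 ^ (m * n * k - k)"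
  show "r \<in> Fq"
    unfolding r_def using assms(2,4) by (intro power_in_subF divide_in_subF)
  moreover have "r ^ 2 ^ k = c / (a + b)"
    unfolding r_def by (rule two_power_root)
  ultimately show "lin_binomial a b k l r = c"
    using \<open>a + b \<noteq> 0\<close> by (simp add: lin_binomial_Fq[OF kl])
qed

lemma congruent_preserves_complement_iff:
  assumes kl: "k mod m = l mod m" and "a + b \<noteq> 0"
  shows "(\<forall>u. u \<notin> Fq \<longrightarrow> lin_binomial a b k l u \<notin> Fq) \<longleftrightarrow>
    a + b \<in> Fq \<and> inj (lin_binomial a b k l)"
proof
  assume preserves: "\<forall>u. u \<notin> Fq \<longrightarrow> lin_binomial a b k l u \<notin> Fq"
  have "lin_binomial a b k l u \<noteq> 0" if "u \<noteq> 0" for u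
  proof
    assume "lin_binomial a b k l u = 0"
    moreover from this have "u \<notin> Fq"
      using \<open>u \<noteq> 0\<close> \<open>a + b \<noteq> 0\<close> lin_binomial_Fq[OF kl] by fastforce
    ultimately show False
      using preserves by fastforce
  qed
  then have "inj (lin_binomial a b k l)"
    by (simp add: inj_lin_binomial_iff)
  moreover obtain u where u: "lin_binomial a b k l u = 1"
    using finite_UNIV_inj_surj[OF finite_UNIV calculation] by (metis surjD)
  then have "u \<in> Fq"
    using preserves one_in_subF by metis
  then have "(a + b) * u ^ 2 ^ k = 1"
    using u lin_binomial_Fq[OF kl] by simp
  then have "a + b = inverse (u ^ 2 ^ k)"
    by (simp add: inverse_unique mult.commute)
  then have "a + b \<in> Fq"
    using \<open>u \<in> Fq\<close> by (simp add: inverse_in_subF power_in_subF)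
  ultimately show "a + b \<in> Fq \<and> inj (lin_binomial a b k l)"
    by blast
next
  assume "a + b \<in> Fq \<and> inj (lin_binomial a b k l)"
  then have "a + b \<in> Fq" and inj: "inj (lin_binomial a b k l)"
    by auto
  show "\<forall>u. u \<notin> Fq \<longrightarrow> lin_binomial a b k l u \<notin> Fq"
  proof (intro allI impI notI)
    fix u
    assume "u \<notin> Fq" and "lin_binomial a b k l u \<in> Fq"
    then obtain r where "r \<in> Fq" "lin_binomial a b k l r = lin_binomial a b k l u"
      using congruent_lin_binomial_onto_Fq[OF kl \<open>a + b \<in> Fq\<close> \<open>a + b \<noteq> 0\<close>] by blast
    then show False
      using inj \<open>u \<notin> Fq\<close> by (metis injD)
  qed
qed

lemma congruent_no_square_value_iff:
  assumes kl: "k mod m = l mod m" and "a + b \<in> Fq"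
  shows "(\<forall>u\<in>Fq. u \<noteq> 0 \<longrightarrow> lin_binomial a b k l u \<noteq> u\<^sup>2) \<longleftrightarrow>
    (a + b) ^ ((2 ^ m - 1) div (2 ^ nat (gcd (int k - 1) (int m)) - 1)) \<noteq> 1"
proof -
  have "(\<forall>u\<in>Fq. u \<noteq> 0 \<longrightarrow> lin_binomial a b k l u \<noteq> u\<^sup>2) \<longleftrightarrow>
    \<not> (\<exists>u\<in>Fq. u \<noteq> 0 \<and> (a + b) * u ^ 2 ^ k = 1 * u ^ 2 ^ 1)"
    using lin_binomial_Fq[OF kl] by auto
  also have "\<dots> \<longleftrightarrow> (a + b) ^ ((2 ^ m - 1) div (2 ^ nat (gcd (int 1 - int k) (int m)) - 1)) \<noteq> 1"
    using binomial_root_in_subF_iff[of m "a + b" 1 k 1] m_pos \<open>a + b \<in> Fq\<close> by simp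
  finally show ?thesis
    by (simp add: gcd_diff_commute_int[of 1])
qed

lemma preserves_complement_equal_coeffs_le:
  assumes kl: "k mod m = l mod m" and "k \<le> l" and "a \<noteq> 0"
  shows "(\<forall>u. u \<notin> Fq \<longrightarrow> lin_binomial a a k l u \<notin> Fq) \<longleftrightarrow>
    nat (gcd (int l - int k) (int (m * n))) = m \<and> T (inverse a) \<noteq> 0"
proof -
  obtain t where t: "l - k = m * t"
    using kl \<open>k \<le> l\<close> by (metis mod_eq_dvd_iff_nat dvdE)
  then have "int l - int k = int (m * t)"
    using \<open>k \<le> l\<close> by (simp flip: of_nat_mult)
  then have d: "nat (gcd (int l - int k) (int (m * n))) = m * gcd t n"
    by (simp only: gcd_int_int_eq nat_int gcd_mult_distrib_nat)
  have fixed_iff: "v ^ (2 ^ m) ^ t = v \<longleftrightarrow> v \<in> subF (2 ^ (m * gcd t n))" for v :: 'a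
  proof -
    have "v ^ (2 ^ m) ^ t = v \<longleftrightarrow> v \<in> subF (2 ^ (m * t))"
      by (simp add: subF_def power_mult)
    also have "\<dots> \<longleftrightarrow> v \<in> subF (2 ^ (m * gcd t n))"
      by (simp add: subF_two_power_gcd[of "m * t"] gcd_mult_distrib_nat)
    finally show ?thesis .
  qed
  have "(2::nat) ^ l = 2 ^ k * (2 ^ m) ^ t"
    using t \<open>k \<le> l\<close> by (metis le_add_diff_inverse power_add power_mult)
  then have "lin_binomial a a k l u = a * (u ^ 2 ^ k + (u ^ 2 ^ k) ^ (2 ^ m) ^ t)" for u
    by (simp add: lin_binomial_def distrib_left power_mult)
  then have preserves_iff: "(\<forall>u. u \<notin> Fq \<longrightarrow> lin_binomial a a k l u \<notin> Fq) \<longleftrightarrow>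
      (\<forall>v. v \<notin> Fq \<longrightarrow> a * (v + v ^ (2 ^ m) ^ t) \<notin> Fq)"
    using all_notin_subF_power_two_power_iff[of m "\<lambda>v. a * (v + v ^ (2 ^ m) ^ t) \<notin> Fq" k] by simp
  show ?thesis
  proof (cases "gcd t n = 1")
    case True
    then have "v \<in> Fq" if "v ^ (2 ^ m) ^ t = v" for v
      using fixed_iff that by simp
    then show ?thesis
      using preserves_iff scaled_add_power_q_power_preserves_complement_iff[OF _ \<open>a \<noteq> 0\<close>] d True
      by simp
  next
    case False
    have "m * gcd t n dvd m * n" "m * gcd t n > 0"
      using m_pos n_pos by simp_all
    moreover have "\<not> m * gcd t n dvd m"
      using False m_pos by simp
    ultimately have "\<not> subF (2 ^ (m * gcd t n)) \<subseteq> Fq"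
      using subF_two_power_subset_iff by blast
    then obtain v where "v ^ (2 ^ m) ^ t = v" "v \<notin> Fq"
      using fixed_iff by blast
    then have "\<not> (\<forall>v. v \<notin> Fq \<longrightarrow> a * (v + v ^ (2 ^ m) ^ t) \<notin> Fq)"
      by (metis add_self mult_zero_right zero_in_subF)
    then show ?thesis
      using preserves_iff d False m_pos by simp
  qed
qed

lemma preserves_complement_equal_coeffs:
  assumes "k mod m = l mod m" and "a \<noteq> 0"
  shows "(\<forall>u. u \<notin> Fq \<longrightarrow> lin_binomial a a k l u \<notin> Fq) \<longleftrightarrow>
    nat (gcd (int l - int k) (int (m * n))) = m \<and> T (inverse a) \<noteq> 0"
proof (cases "k \<le> l")
  case False
  have "lin_binomial a a k l = lin_binomial a a l k"
    unfolding lin_binomial_def by (rule ext) (rule add.commute)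
  then show ?thesis
    using preserves_complement_equal_coeffs_le[of l k a] assms False
    by (simp add: gcd_diff_commute_int[of "int k"])
qed (use preserves_complement_equal_coeffs_le assms in blast)

lemma preserves_complement_imp_maps_Fq:
  assumes "\<forall>u. u \<notin> Fq \<longrightarrow> lin_binomial a b k l u \<notin> Fq"
  shows "\<forall>c\<in>Fq. lin_binomial a b k l c \<in> Fq"
proof -
  have "lin_binomial a b k l -` Fq = Fq"
    using assms by (intro additive_preimage_Fq lin_binomial_add) blast
  then show ?thesis
    by blast
qed

lemma exists_Fq_power_two_power_ne:
  assumes "k mod m \<noteq> l mod m"
  shows "\<exists>c\<in>Fq. c ^ 2 ^ k \<noteq> c ^ 2 ^ l"
proof (rule ccontr)
  define d where "d = nat (gcd (int l - int k) (int (m * n)))"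
  assume "\<not> (\<exists>c\<in>Fq. c ^ 2 ^ k \<noteq> c ^ 2 ^ l)"
  then have "Fq \<subseteq> subF (2 ^ d)"
    by (auto simp: d_def power_two_power_eq_iff_subF)
  then have "m dvd d"
    using subF_two_power_subset_iff[of m d] m_pos by simp
  then have "int m dvd int l - int k"
    unfolding d_def by (metis dvd_trans gcd_dvd1 int_dvd_int_iff nat_0_le gcd_ge_0_int int_nat_eq)
  then show False
    using assms by (metis mod_eq_dvd_iff of_nat_eq_iff of_nat_mod)
qed

lemma maps_Fq_imp_coefficients_in_Fq:
  assumes kl: "k mod m \<noteq> l mod m" and maps: "\<forall>c\<in>Fq. lin_binomial a b k l c \<in> Fq"
  shows "a \<in> Fq \<and> b \<in> Fq"
proof -
  obtain c where "c \<in> Fq" and "c ^ 2 ^ k \<noteq> c ^ 2 ^ l"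
    using exists_Fq_power_two_power_ne[OF kl] by blast
  have "lin_binomial a b k l 1 \<in> Fq"
    using maps one_in_subF by blast
  then have "a + b \<in> Fq"
    by (simp add: lin_binomial_def)
  have "a * (c ^ 2 ^ k + c ^ 2 ^ l) = lin_binomial a b k l c + (a + b) * c ^ 2 ^ l"
    by (simp add: lin_binomial_def algebra_simps)
  also have "\<dots> \<in> Fq"
    using maps \<open>c \<in> Fq\<close> \<open>a + b \<in> Fq\<close> by (simp add: add_in_subF mult_in_subF power_in_subF)
  finally have "a * (c ^ 2 ^ k + c ^ 2 ^ l) \<in> Fq" .
  moreover have "c ^ 2 ^ k + c ^ 2 ^ l \<in> Fq"
    using \<open>c \<in> Fq\<close> by (simp add: add_in_subF power_in_subF)
  ultimately have "a * (c ^ 2 ^ k + c ^ 2 ^ l) / (c ^ 2 ^ k + c ^ 2 ^ l) \<in> Fq"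
    by (rule divide_in_subF)
  then have "a \<in> Fq"
    using \<open>c ^ 2 ^ k \<noteq> c ^ 2 ^ l\<close> by (simp add: add_eq_0_iff_eq)
  moreover have "b \<in> Fq"
    using \<open>a + b \<in> Fq\<close> \<open>a \<in> Fq\<close> by (metis add_in_subF_iff add.commute)
  ultimately show ?thesis
    by blast
qed

lemma preserves_complement_iff_kernel_in_Fq:
  assumes "a \<in> Fq" "b \<in> Fq"
  shows "(\<forall>u. u \<notin> Fq \<longrightarrow> lin_binomial a b k l u \<notin> Fq) \<longleftrightarrow>
    (\<forall>u. lin_binomial a b k l u = 0 \<longrightarrow> u \<in> Fq)"
proof
  assume "\<forall>u. u \<notin> Fq \<longrightarrow> lin_binomial a b k l u \<notin> Fq"
  then show "\<forall>u. lin_binomial a b k l u = 0 \<longrightarrow> u \<in> Fq"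
    using zero_in_subF by metis
next
  assume kernel: "\<forall>u. lin_binomial a b k l u = 0 \<longrightarrow> u \<in> Fq"
  show "\<forall>u. u \<notin> Fq \<longrightarrow> lin_binomial a b k l u \<notin> Fq"
  proof (intro allI impI notI)
    fix u
    assume "u \<notin> Fq" and "lin_binomial a b k l u \<in> Fq"
    have "lin_binomial a b k l (T u) \<in> Fq"
      using assms Tr_in_Fq by (rule lin_binomial_in_subF)
    then have "lin_binomial a b k l (u + T u) \<in> Fq"
      using \<open>lin_binomial a b k l u \<in> Fq\<close> by (simp add: lin_binomial_add add_in_subF)
    moreover have "T (lin_binomial a b k l (u + T u)) = 0"
      using assms by (simp add: Tr_lin_binomial Tr_add Tr_Fq Tr_in_Fq)
    ultimately have "lin_binomial a b k l (u + T u) = 0"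
      by (simp add: Tr_Fq)
    then have "u + T u \<in> Fq"
      using kernel by blast
    then have "(u + T u) + T u \<in> Fq"
      using Tr_in_Fq by (rule add_in_subF)
    then show False
      using \<open>u \<notin> Fq\<close> by (simp add: add.assoc)
  qed
qed

lemma kernel_in_Fq_iff_of_root:
  assumes "a \<noteq> 0" "b \<noteq> 0" "u0 \<noteq> 0" "lin_binomial a b k l u0 = 0"
  defines "d \<equiv> nat (gcd (int l - int k) (int (m * n)))"
  shows "(\<forall>u. lin_binomial a b k l u = 0 \<longrightarrow> u \<in> Fq) \<longleftrightarrow>
    d dvd m \<and> (\<exists>u\<in>Fq. u \<noteq> 0 \<and> lin_binomial a b k l u = 0)"
proof -
  have "d dvd m * n" "d > 0"
    unfolding d_def by (rule nat_gcd_N_dvd nat_gcd_N_pos)+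
  then have subset_iff: "subF (2 ^ d) \<subseteq> Fq \<longleftrightarrow> d dvd m"
    by (rule subF_two_power_subset_iff)
  show ?thesis
  proof
    assume kernel: "\<forall>u. lin_binomial a b k l u = 0 \<longrightarrow> u \<in> Fq"
    have "subF (2 ^ d) \<subseteq> Fq"
    proof
      fix w :: 'a
      assume "w \<in> subF (2 ^ d)"
      then have "lin_binomial a b k l (u0 * w) = 0"
        using lin_binomial_eq_0_iff_div_in_subF[OF assms(1-4)] \<open>u0 \<noteq> 0\<close> by (simp add: d_def)
      then have "u0 * w / u0 \<in> Fq"
        using kernel assms(4) by (blast intro: divide_in_subF)
      then show "w \<in> Fq"
        using \<open>u0 \<noteq> 0\<close> by simp
    qed
    then have "d dvd m"
      using subset_iff by blast
    then show "d dvd m \<and> (\<exists>u\<in>Fq. u \<noteq> 0 \<and> lin_binomial a b k l u = 0)"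
      using kernel assms(3,4) by blast
  next
    assume "d dvd m \<and> (\<exists>u\<in>Fq. u \<noteq> 0 \<and> lin_binomial a b k l u = 0)"
    then obtain u1 where "d dvd m" "u1 \<in> Fq" "u1 \<noteq> 0" and root: "lin_binomial a b k l u1 = 0"
      by blast
    have "subF (2 ^ d) \<subseteq> Fq"
      using subset_iff \<open>d dvd m\<close> by blast
    show "\<forall>u. lin_binomial a b k l u = 0 \<longrightarrow> u \<in> Fq"
    proof (intro allI impI)
      fix u
      assume "lin_binomial a b k l u = 0"
      then have "u / u1 \<in> Fq"
        using lin_binomial_eq_0_iff_div_in_subF[OF assms(1,2) \<open>u1 \<noteq> 0\<close> root] \<open>subF (2 ^ d) \<subseteq> Fq\<close>
        by (auto simp: d_def)
      then have "u / u1 * u1 \<in> Fq"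
        using \<open>u1 \<in> Fq\<close> by (rule mult_in_subF)
      then show "u \<in> Fq"
        using \<open>u1 \<noteq> 0\<close> by simp
    qed
  qed
qed

lemma kernel_in_Fq_iff:
  assumes "a \<in> Fq" "b \<in> Fq" and nonzero: "\<exists>x. lin_binomial a b k l x \<noteq> 0"
  defines "d \<equiv> nat (gcd (int l - int k) (int (m * n)))"
  shows "(\<forall>u. lin_binomial a b k l u = 0 \<longrightarrow> u \<in> Fq) \<longleftrightarrow>
    a ^ ((2 ^ (m * n) - 1) div (2 ^ d - 1)) \<noteq> b ^ ((2 ^ (m * n) - 1) div (2 ^ d - 1)) \<or>
    (d dvd m \<and> a ^ ((2 ^ m - 1) div (2 ^ d - 1)) = b ^ ((2 ^ m - 1) div (2 ^ d - 1)))"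
proof (cases "a ^ ((2 ^ (m * n) - 1) div (2 ^ d - 1)) = b ^ ((2 ^ (m * n) - 1) div (2 ^ d - 1))")
  case False
  then have "\<forall>u. u \<noteq> 0 \<longrightarrow> lin_binomial a b k l u \<noteq> 0"
    using binomial_root_iff[of a k b l] by (simp add: d_def lin_binomial_eq_0_iff) blast
  then have "lin_binomial a b k l u = 0 \<longrightarrow> u \<in> Fq" for u
    by (metis zero_in_subF)
  then show ?thesis
    using False by blast
next
  case True
  then obtain u0 where "u0 \<noteq> 0" and root: "lin_binomial a b k l u0 = 0"
    using binomial_root_iff[of a k b l] by (auto simp: d_def lin_binomial_eq_0_iff)
  then have "a \<noteq> 0" "b \<noteq> 0"
    using nonzero by (auto simp: lin_binomial_def)
  have "(\<exists>u\<in>Fq. u \<noteq> 0 \<and> lin_binomial a b k l u = 0) \<longleftrightarrow>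
      a ^ ((2 ^ m - 1) div (2 ^ d - 1)) = b ^ ((2 ^ m - 1) div (2 ^ d - 1))"
    if "d dvd m"
  proof -
    have "gcd (int l - int k) (int m) = gcd (int l - int k) (int (m * n))"
      using that by (intro gcd_eq_gcd_of_dvd) (simp_all add: d_def flip: int_dvd_int_iff)
    then show ?thesis
      using binomial_root_in_subF_iff[of m a b k l] assms(1,2) m_pos
      by (simp add: d_def lin_binomial_eq_0_iff)
  qed
  then show ?thesis
    using kernel_in_Fq_iff_of_root[OF \<open>a \<noteq> 0\<close> \<open>b \<noteq> 0\<close> \<open>u0 \<noteq> 0\<close> root] True
    by (auto simp: d_def)
qed

lemma no_square_value_iff:
  assumes "a \<in> Fq" "b \<in> Fq" and l: "l mod m = 1 mod m"
  shows "(\<forall>u\<in>Fq. u \<noteq> 0 \<longrightarrow> lin_binomial a b k l u \<noteq> u\<^sup>2) \<longleftrightarrow>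
    a ^ ((2 ^ m - 1) div (2 ^ nat (gcd (int k - 1) (int m)) - 1)) \<noteq>
    (b + 1) ^ ((2 ^ m - 1) div (2 ^ nat (gcd (int k - 1) (int m)) - 1))"
proof -
  have "lin_binomial a b k l u = u\<^sup>2 \<longleftrightarrow> a * u ^ 2 ^ k = (b + 1) * u ^ 2 ^ 1" if "u \<in> Fq" for u
  proof -
    have "u ^ 2 ^ l = u ^ 2 ^ 1"
      using subF_power_two_power_mod[OF that, of l] subF_power_two_power_mod[OF that, of 1] l by simp
    then show ?thesis
      by (simp add: lin_binomial_def distrib_right power2_eq_square add_eq_iff_eq_add)
  qed
  then have "(\<forall>u\<in>Fq. u \<noteq> 0 \<longrightarrow> lin_binomial a b k l u \<noteq> u\<^sup>2) \<longleftrightarrow>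
    \<not> (\<exists>u\<in>Fq. u \<noteq> 0 \<and> a * u ^ 2 ^ k = (b + 1) * u ^ 2 ^ 1)"
    by blast
  also have "\<dots> \<longleftrightarrow> a ^ ((2 ^ m - 1) div (2 ^ nat (gcd (int 1 - int k) (int m)) - 1)) \<noteq>
    (b + 1) ^ ((2 ^ m - 1) div (2 ^ nat (gcd (int 1 - int k) (int m)) - 1))"
    using binomial_root_in_subF_iff[of m a "b + 1" k 1] assms(1,2) m_pos
    by (simp add: add_in_subF)
  finally show ?thesis
    by (simp add: gcd_diff_commute_int[of 1])
qed

section \<open>The permutation polynomials \<open>Tr (x^(q+1)) + a x^(2^k) + b x^(2^l)\<close>\<close>

lemma bij_iff_lin_binomial:
  "bij (\<lambda>x. T (x ^ (2 ^ m + 1)) + a * x ^ 2 ^ k + b * x ^ 2 ^ l) \<longleftrightarrow>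
    (\<forall>u. u \<notin> Fq \<longrightarrow> lin_binomial a b k l u \<notin> Fq) \<and>
    (\<forall>u\<in>Fq. u \<noteq> 0 \<longrightarrow> lin_binomial a b k l u \<noteq> u\<^sup>2)"
proof -
  have "(\<lambda>x. T (x ^ (2 ^ m + 1)) + a * x ^ 2 ^ k + b * x ^ 2 ^ l) =
    (\<lambda>x. T (x ^ (2 ^ m + 1)) + lin_binomial a b k l x)"
    by (simp add: lin_binomial_def add.assoc)
  then show ?thesis
    using bij_Tr_power_q_plus_one_add_iff[of "lin_binomial a b k l", OF lin_binomial_add] by simp
qed

theorem bij_congruent_iff:
  assumes kl: "k mod m = l mod m" and nonzero: "\<exists>x. a * x ^ 2 ^ k + b * x ^ 2 ^ l \<noteq> 0"
  defines "d \<equiv> nat (gcd (int l - int k) (int (m * n)))"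
    and "s \<equiv> nat (gcd (int k - 1) (int m))"
  shows "bij (\<lambda>x. T (x ^ (2 ^ m + 1)) + a * x ^ 2 ^ k + b * x ^ 2 ^ l) \<longleftrightarrow>
    (a + b \<in> Fq \<and> a + b \<noteq> 0 \<and> (a + b) ^ ((2 ^ m - 1) div (2 ^ s - 1)) \<noteq> 1 \<and>
      a ^ (((2 ^ m) ^ n - 1) div (2 ^ d - 1)) \<noteq> b ^ (((2 ^ m) ^ n - 1) div (2 ^ d - 1))) \<or>
    (a + b = 0 \<and> d = m \<and> T (inverse a) \<noteq> 0)"
proof (cases "a + b = 0")
  case True
  then have "b = a" "a \<noteq> 0"
    using nonzero by (auto simp: add_eq_0_iff_eq)
  then have "\<forall>u\<in>Fq. u \<noteq> 0 \<longrightarrow> lin_binomial a b k l u \<noteq> u\<^sup>2"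
    using lin_binomial_Fq[OF kl] by simp
  then show ?thesis
    unfolding bij_iff_lin_binomial d_def \<open>b = a\<close>
    using preserves_complement_equal_coeffs[OF kl \<open>a \<noteq> 0\<close>] \<open>b = a\<close> by simp
next
  case False
  have "inj (lin_binomial a b k l) \<longleftrightarrow>
      a ^ (((2 ^ m) ^ n - 1) div (2 ^ d - 1)) \<noteq> b ^ (((2 ^ m) ^ n - 1) div (2 ^ d - 1))"
    unfolding inj_lin_binomial_iff lin_binomial_eq_0_iff d_def power_mult[symmetric]
    using binomial_root_iff[of a k b l] by blast
  then show ?thesis
    unfolding bij_iff_lin_binomial congruent_preserves_complement_iff[OF kl False] s_def
    using congruent_no_square_value_iff[OF kl] False by blast
qed

theorem bij_l_one_iff:
  assumes kl: "k mod m \<noteq> l mod m" and l: "l mod m = 1 mod m"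
    and nonzero: "\<exists>x. a * x ^ 2 ^ k + b * x ^ 2 ^ l \<noteq> 0"
  defines "d \<equiv> nat (gcd (int l - int k) (int (m * n)))"
    and "s \<equiv> nat (gcd (int k - 1) (int m))"
  shows "bij (\<lambda>x. T (x ^ (2 ^ m + 1)) + a * x ^ 2 ^ k + b * x ^ 2 ^ l) \<longleftrightarrow>
    a \<in> Fq \<and> b \<in> Fq \<and> a ^ ((2 ^ m - 1) div (2 ^ s - 1)) \<noteq> (b + 1) ^ ((2 ^ m - 1) div (2 ^ s - 1)) \<and>
    (a ^ (((2 ^ m) ^ n - 1) div (2 ^ d - 1)) \<noteq> b ^ (((2 ^ m) ^ n - 1) div (2 ^ d - 1)) \<or>
     (d dvd m \<and> a ^ ((2 ^ m - 1) div (2 ^ d - 1)) = b ^ ((2 ^ m - 1) div (2 ^ d - 1))))"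
proof (cases "a \<in> Fq \<and> b \<in> Fq")
  case True
  then have "a \<in> Fq" "b \<in> Fq"
    by auto
  have nonzero': "\<exists>x. lin_binomial a b k l x \<noteq> 0"
    using nonzero by (simp add: lin_binomial_def)
  show ?thesis
    unfolding bij_iff_lin_binomial preserves_complement_iff_kernel_in_Fq[OF \<open>a \<in> Fq\<close> \<open>b \<in> Fq\<close>]
      kernel_in_Fq_iff[OF \<open>a \<in> Fq\<close> \<open>b \<in> Fq\<close> nonzero'] no_square_value_iff[OF \<open>a \<in> Fq\<close> \<open>b \<in> Fq\<close> l]
      d_def s_def power_mult[symmetric]
    using True by blast
next
  case False
  have "\<not> (\<forall>u. u \<notin> Fq \<longrightarrow> lin_binomial a b k l u \<notin> Fq)"
  proof
    assume "\<forall>u. u \<notin> Fq \<longrightarrow> lin_binomial a b k l u \<notin> Fq"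
    then have "\<forall>c\<in>Fq. lin_binomial a b k l c \<in> Fq"
      by (rule preserves_complement_imp_maps_Fq)
    then show False
      using maps_Fq_imp_coefficients_in_Fq[OF kl] False by blast
  qed
  then have "\<not> bij (\<lambda>x. T (x ^ (2 ^ m + 1)) + a * x ^ 2 ^ k + b * x ^ 2 ^ l)"
    unfolding bij_iff_lin_binomial by blast
  then show ?thesis
    using False by blast
qed

theorem bij_monomial_iff:
  assumes "a \<noteq> 0"
  shows "bij (\<lambda>x. T (x ^ (2 ^ m + 1)) + a * x ^ 2 ^ k) \<longleftrightarrow>
    a \<in> Fq \<and> a \<noteq> 0 \<and> a ^ ((2 ^ m - 1) div (2 ^ nat (gcd (int k - 1) (int m)) - 1)) \<noteq> 1"
proof -
  have "\<exists>x. a * x ^ 2 ^ k + 0 * x ^ 2 ^ k \<noteq> 0"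
    using assms by (auto intro: exI[of _ 1])
  moreover have "nat (gcd (int k - int k) (int (m * n))) = m * n"
    by (simp del: of_nat_mult)
  moreover have "(((2::nat) ^ m) ^ n - 1) div (2 ^ (m * n) - 1) = 1"
    using two_power_minus_one_pos[OF N_pos] by (simp flip: power_mult)
  ultimately show ?thesis
    using bij_congruent_iff[of k k a 0] assms by simp
qed

end

theorem mainTheorem3:
  fixes a b :: "'a::{finite,field}" and m n k l :: nat
  assumes m: "m \<ge> 1"
    and card: "card (UNIV :: 'a set) = 2 ^ (m * n)"
    and n_odd: "odd n"
    and k: "k < m * n" and l: "l < m * n"
    and L_nonzero: "\<exists>x::'a. a * x ^ (2 ^ k) + b * x ^ (2 ^ l) \<noteq> 0"
  defines "q \<equiv> (2::nat) ^ m"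
    and "d \<equiv> nat (gcd (int l - int k) (int (m * n)))"
    and "s \<equiv> nat (gcd (int k - 1) (int m))"
  shows
   "(k mod m = l mod m \<longrightarrow>
      (perm_poly (\<lambda>x. Tr q n (x ^ (q + 1)) + a * x ^ (2 ^ k) + b * x ^ (2 ^ l)) \<longleftrightarrow>
        ((a + b \<in> subF q \<and> a + b \<noteq> 0 \<and> (a + b) ^ ((q - 1) div (2 ^ s - 1)) \<noteq> 1 \<and>
          a ^ ((q ^ n - 1) div (2 ^ d - 1)) \<noteq> b ^ ((q ^ n - 1) div (2 ^ d - 1)))
         \<or> (a + b = 0 \<and> d = m \<and> Tr q n (inverse a) \<noteq> 0))))
    \<and> ((\<not> k mod m = l mod m \<and> l mod m = 1 mod m) \<longrightarrow>
      (perm_poly (\<lambda>x. Tr q n (x ^ (q + 1)) + a * x ^ (2 ^ k) + b * x ^ (2 ^ l)) \<longleftrightarrow>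
        (a \<in> subF q \<and> b \<in> subF q \<and>
         a ^ ((q - 1) div (2 ^ s - 1)) \<noteq> (b + 1) ^ ((q - 1) div (2 ^ s - 1)) \<and>
         (a ^ ((q ^ n - 1) div (2 ^ d - 1)) \<noteq> b ^ ((q ^ n - 1) div (2 ^ d - 1))
          \<or> (d dvd m \<and> a ^ ((q - 1) div (2 ^ d - 1)) = b ^ ((q - 1) div (2 ^ d - 1)))))))
    \<and> (b = 0 \<longrightarrow>
      (perm_poly (\<lambda>x. Tr q n (x ^ (q + 1)) + a * x ^ (2 ^ k)) \<longleftrightarrow>
        (a \<in> subF q \<and> a \<noteq> 0 \<and> a ^ ((q - 1) div (2 ^ s - 1)) \<noteq> 1)))"
proof -
  obtain g :: 'a where "\<And>x. x \<noteq> 0 \<Longrightarrow> \<exists>i. x = g ^ i"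
    and "\<And>i. g ^ i = 1 \<longleftrightarrow> (card (UNIV::'a set) - 1) dvd i"
    using finite_field_has_primitive_element by blast
  then interpret odd_binary_extension m n g
    using m card n_odd by unfold_locales auto
  have "a \<noteq> 0" if "b = 0"
    using L_nonzero that by auto
  then show ?thesis
    unfolding perm_poly_def q_def d_def s_def
    using bij_congruent_iff[OF _ L_nonzero] bij_l_one_iff[OF _ _ L_nonzero] bij_monomial_iff
    by auto
qed

end
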